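(* For every positive integer $n$, $\delta(n)\le 13\log_6 n+7$; that is, $n\in E_k$ for every integer $k\ge 13\log_6 n+7$.
   Context: For a finite nonempty multiset $S$ of real numbers, $V(S)$ is the smallest set of real numbers such that: (1) if $|S|=1$ then $S\subseteq V(S)$; (2) if $|S|\ge 2$, then for all nonempty multisets $A,B$ with $A+B=S$ (multiplicities add) and all $a\in V(A)$, $b\in V(B)$, each of $a+b,\ a-b,\ b-a,\ ab,\ a/b,\ b/a,\ a^b,\ b^a$ lies in $V(S)$ whenever it is a well-defined real number; (3) if $a\in V(S)$ is a nonnegative integer then $a!\in V(S)$ (with $0!=1$). Let $D=\{0,\dots,9\}$; for $k\ge1$, $E_k$ is the intersection of $V(S)$ over all multisets $S$ of size $k$ with all elements in $D$ (one has $E_k\subseteq E_{k+1}$). For a number $n$, $\delta(n)=\min\{k\ge1: n\in E_k\}$. *)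

theory Defs
  imports Complex_Main "HOL-Library.Multiset"
begin

text \<open>Real exponentiation x^y, defined only when it is a well-defined real number
  (conservative convention): x > 0 (any y); x = 0 and y > 0 (value 0);
  x \<noteq> 0 and y an integer (value x powi y).\<close>
definition pow_vals :: "real \<Rightarrow> real \<Rightarrow> real set" where
  "pow_vals x y =
     {z. (x > 0 \<and> z = x powr y)
       \<or> (x = 0 \<and> y > 0 \<and> z = 0)
       \<or> (x \<noteq> 0 \<and> y \<in> \<int> \<and> z = x powi \<lfloor>y\<rfloor>)}"

definition ops :: "real \<Rightarrow> real \<Rightarrow> real set" where
  "ops a b =
     {a + b, a - b, b - a, a * b}
     \<union> (if b \<noteq> 0 then {a / b} else {})
     \<union> (if a \<noteq> 0 then {b / a} else {})
     \<union> pow_vals a b \<union> pow_vals b a"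

inductive V :: "real multiset \<Rightarrow> real \<Rightarrow> bool" where
  single: "V {#x#} x"
| comb: "A \<noteq> {#} \<Longrightarrow> B \<noteq> {#} \<Longrightarrow> V A a \<Longrightarrow> V B b \<Longrightarrow> c \<in> ops a b \<Longrightarrow> V (A + B) c"
| factorial: "V S a \<Longrightarrow> a \<in> \<int> \<Longrightarrow> a \<ge> 0 \<Longrightarrow> V S (fact (nat \<lfloor>a\<rfloor>))"

definition E :: "nat \<Rightarrow> real set" where
  "E k = {x. \<forall>S. size S = k \<and> set_mset S \<subseteq> real ` {0..9} \<longrightarrow> V S x}"

end

theory Submission
  imports Defs
begin

text \<open>Say x is obtainable from j ones if it is the value of an expression with exactly j leaves,
  all equal to 1, built with the eight operations and the factorial. A digit multiset of size at
  least 2j + 3 splits into j nonempty blocks each producing 1: by pigeonhole every five digits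
  contain a 0, a 1, a pair a, a or a pair a, a + 1, and the last block absorbs all leftover digits
  through 1^x = 1. Substituting the blocks for the leaves, the multiset produces x.
  Writing n = 6q + r with r \<le> 3, or n = 6(q + 1) - s with s \<le> 2, and using 6 = 3!, n needs at
  most six more ones than q (resp. five more than q + 1); since 6^12 \<le> 6^13 and 6^10 \<le> 5^13,
  induction gives 6^(2j) \<le> 6^4 n^13, i.e. 2j + 3 \<le> 13 log_6 n + 7.\<close>

lemma size_mset_eq_sum_count:
  assumes "finite A" "set_mset M \<subseteq> A"
  shows "size M = sum (count M) A"
proof -
  have "size M = sum (count M) (set_mset M)" by (rule size_multiset_overloaded_eq)
  also have "\<dots> = sum (count M) A"
    using assms by (intro sum.mono_neutral_left) (auto simp: count_eq_zero_iff)
  finally show ?thesis .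
qed

lemma ops_add: "a + b \<in> ops a b" by (simp add: ops_def)
lemma ops_diff: "a - b \<in> ops a b" by (simp add: ops_def)
lemma ops_mult: "a * b \<in> ops a b" by (simp add: ops_def)
lemma ops_div: "b \<noteq> 0 \<Longrightarrow> a / b \<in> ops a b" by (simp add: ops_def)
lemma ops_one_powr: "1 \<in> ops 1 b" by (simp add: ops_def pow_vals_def)

lemma V_nonempty_ex: "R \<noteq> {#} \<Longrightarrow> \<exists>x. V R x"
proof (induction R)
  case empty
  then show ?case by simp
next
  case (add y R)
  show ?case
  proof (cases "R = {#}")
    case True
    then show ?thesis using V.single by auto
  next
    case False
    then obtain x where "V R x" using add by auto
    then have "V ({#y#} + R) (y + x)"
      using V.comb[of "{#y#}" R y x] V.single False ops_add by auto
    then show ?thesis by auto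
  qed
qed

lemma V_one_add: assumes "V P 1" "P \<noteq> {#}" shows "V (P + R) 1"
proof (cases "R = {#}")
  case True
  then show ?thesis using assms by simp
next
  case False
  then obtain x where "V R x" using V_nonempty_ex by auto
  then show ?thesis using V.comb[of P R 1 x 1] assms False ops_one_powr by auto
qed

lemma V_fact_zero: "V {#0#} 1"
  using V.factorial[OF V.single[of 0]] by simp

lemma V_div_self: "a \<noteq> 0 \<Longrightarrow> V {#a, a#} 1"
  using V.comb[of "{#a#}" "{#a#}" a a 1] V.single ops_div[of a a] by simp

lemma V_succ_diff: "V {#a, a + 1#} 1"
  using V.comb[of "{#a+1#}" "{#a#}" "a+1" a 1] V.single ops_diff[of "a+1" a] by simp

lemma digits_small_unit_block:
  assumes digits: "set_mset S \<subseteq> real ` {0..9}" and size: "size S \<ge> 5"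
  shows "\<exists>P. P \<subseteq># S \<and> P \<noteq> {#} \<and> size P \<le> 2 \<and> V P 1"
proof (rule ccontr)
  assume "\<not> ?thesis"
  then have no_block: "\<not> P \<subseteq># S" if "P \<noteq> {#}" "size P \<le> 2" "V P 1" for P
    using that by blast
  have zero: "count S 0 = 0"
    using no_block[of "{#0#}"] V_fact_zero by (simp add: count_eq_zero_iff)
  have one: "count S 1 = 0"
    using no_block[of "{#1#}"] V.single[of 1] by (simp add: count_eq_zero_iff)
  have twice: "count S a \<le> 1" if "a \<noteq> 0" for a :: real
  proof (rule ccontr)
    assume "\<not> count S a \<le> 1"
    then have "{#a, a#} \<subseteq># S" by (simp add: subseteq_mset_def)
    then show False using no_block V_div_self[OF that] by simp
  qed
  have consecutive: "count S a = 0 \<or> count S (a + 1) = 0" for a :: real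
  proof (rule ccontr)
    assume "\<not> ?thesis"
    then have "{#a, a + 1#} \<subseteq># S" by (auto simp: subseteq_mset_def)
    then show False using no_block V_succ_diff by simp
  qed
  have pair: "count S a + count S (a + 1) \<le> 1" if "a > 0" for a :: real
    using twice[of a] twice[of "a + 1"] consecutive[of a] that by linarith
  have "size S = (\<Sum>i\<in>{0..9::nat}. count S (real i))"
    using size_mset_eq_sum_count[of "real ` {0..9}" S] digits
    by (simp add: sum.reindex inj_on_def)
  also have "\<dots> = count S 0 + count S 1 + (count S 2 + count S (2 + 1))
      + (count S 4 + count S (4 + 1)) + (count S 6 + count S (6 + 1))
      + (count S 8 + count S (8 + 1))"
    by (simp add: atLeast0AtMost numeral_eq_Suc algebra_simps)
  also have "\<dots> \<le> 4" using zero one pair[of 2] pair[of 4] pair[of 6] pair[of 8] by simp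
  finally show False using size by simp
qed

inductive unit_blocks :: "nat \<Rightarrow> real multiset \<Rightarrow> bool" where
  empty: "unit_blocks 0 {#}"
| block: "P \<noteq> {#} \<Longrightarrow> V P 1 \<Longrightarrow> unit_blocks j R \<Longrightarrow> unit_blocks (Suc j) (P + R)"

lemma unit_blocks_nonempty: "unit_blocks j S \<Longrightarrow> j \<ge> 1 \<Longrightarrow> S \<noteq> {#}"
  by (cases rule: unit_blocks.cases) auto

lemma unit_blocks_split:
  "unit_blocks (i + j) S \<Longrightarrow> \<exists>A B. S = A + B \<and> unit_blocks i A \<and> unit_blocks j B"
proof (induction i arbitrary: S)
  case 0
  then show ?case using unit_blocks.empty by (intro exI[of _ "{#}"] exI[of _ S]) simp
next
  case (Suc i)
  then obtain P R where "S = P + R" "P \<noteq> {#}" "V P 1" "unit_blocks (i + j) R"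
    by (auto elim: unit_blocks.cases)
  with Suc.IH obtain A B where "R = A + B" "unit_blocks i A" "unit_blocks j B" by blast
  with \<open>S = P + R\<close> \<open>P \<noteq> {#}\<close> \<open>V P 1\<close> show ?case
    by (metis add.assoc unit_blocks.block)
qed

lemma digits_unit_blocks:
  assumes "j \<ge> 1" "set_mset S \<subseteq> real ` {0..9}" "size S \<ge> 2 * j + 3"
  shows "unit_blocks j S"
  using assms
proof (induction j arbitrary: S rule: dec_induct)
  case base
  then have "size S \<ge> 5" by simp
  then obtain P where P: "P \<subseteq># S" "P \<noteq> {#}" "V P 1"
    using digits_small_unit_block[OF base.prems(1)] by blast
  then have "V S 1" using V_one_add[of P "S - P"] by (simp add: subset_mset.add_diff_inverse)
  moreover have "S \<noteq> {#}" using P by auto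
  ultimately have "unit_blocks (Suc 0) (S + {#})"
    by (intro unit_blocks.block unit_blocks.empty)
  then show ?case by simp
next
  case (step j)
  then have "size S \<ge> 5" by simp
  then obtain P where P: "P \<subseteq># S" "P \<noteq> {#}" "V P 1" "size P \<le> 2"
    using digits_small_unit_block[OF step.prems(1)] by blast
  have "set_mset (S - P) \<subseteq> real ` {0..9}"
    using step.prems(1) by (meson in_diffD subset_iff)
  moreover have "size (S - P) \<ge> 2 * j + 3"
    using step.prems(2) P(1,4) by (simp add: size_Diff_submset)
  ultimately have "unit_blocks j (S - P)" using step.IH by blast
  then have "unit_blocks (Suc j) (P + (S - P))" using P(2,3) by (intro unit_blocks.block)
  with P(1) show ?case by (simp add: subset_mset.add_diff_inverse)
qed

inductive from_ones :: "nat \<Rightarrow> real \<Rightarrow> bool" where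
  one: "from_ones 1 1"
| comb: "from_ones i a \<Longrightarrow> from_ones j b \<Longrightarrow> c \<in> ops a b \<Longrightarrow> from_ones (i + j) c"
| factorial: "from_ones j a \<Longrightarrow> a \<in> \<int> \<Longrightarrow> a \<ge> 0 \<Longrightarrow> from_ones j (fact (nat \<lfloor>a\<rfloor>))"

lemma from_ones_pos: "from_ones j x \<Longrightarrow> j \<ge> 1"
  by (induction rule: from_ones.induct) auto

lemma from_ones_imp_V: "from_ones j x \<Longrightarrow> unit_blocks j S \<Longrightarrow> V S x"
proof (induction arbitrary: S rule: from_ones.induct)
  case one
  then obtain P R where "S = P + R" "V P 1" "unit_blocks 0 R"
    by (auto elim: unit_blocks.cases)
  then show ?case by (auto elim: unit_blocks.cases)
next
  case (comb i a j b c)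
  then obtain A B where AB: "S = A + B" "unit_blocks i A" "unit_blocks j B"
    using unit_blocks_split by blast
  moreover have "A \<noteq> {#}" "B \<noteq> {#}"
    using AB comb.hyps unit_blocks_nonempty from_ones_pos by blast+
  ultimately show ?case using comb V.comb by blast
next
  case (factorial j a)
  then show ?case by (simp add: V.factorial)
qed

lemma from_ones_add: "from_ones i a \<Longrightarrow> from_ones j b \<Longrightarrow> from_ones (i + j) (a + b)"
  using from_ones.comb ops_add by blast

lemma from_ones_diff: "from_ones i a \<Longrightarrow> from_ones j b \<Longrightarrow> from_ones (i + j) (a - b)"
  using from_ones.comb ops_diff by blast

lemma from_ones_mult: "from_ones i a \<Longrightarrow> from_ones j b \<Longrightarrow> from_ones (i + j) (a * b)"
  using from_ones.comb ops_mult by blast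

lemma from_ones_mono:
  assumes "from_ones i x" "i \<le> j"
  shows "from_ones j x"
  using assms(2)
proof (induction j rule: dec_induct)
  case base
  then show ?case using assms(1) .
next
  case (step j)
  then show ?case using from_ones_mult[OF _ from_ones.one, of j x] by simp
qed

lemma from_ones_of_nat: "n \<ge> 1 \<Longrightarrow> from_ones n (real n)"
proof (induction n rule: dec_induct)
  case base
  then show ?case using from_ones.one by simp
next
  case (step n)
  then show ?case using from_ones_add[OF step.IH from_ones.one] by (simp add: add.commute)
qed

lemma from_ones_six: "from_ones 3 6"
  using from_ones.factorial[OF from_ones_of_nat[of 3]] by (simp add: fact_numeral)

lemma from_ones_six_times_add:
  assumes "from_ones j x" "r \<le> 3"
  shows "from_ones (j + 6) (6 * x + real r)"
proof -
  have six: "from_ones (j + 3) (6 * x)"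
    using from_ones_mult[OF from_ones_six assms(1)] by (simp add: add.commute)
  show ?thesis
  proof (cases "r = 0")
    case True
    then show ?thesis using from_ones_mono[OF six] by simp
  next
    case False
    then have "from_ones (j + 3 + r) (6 * x + real r)"
      using from_ones_add[OF six from_ones_of_nat] by simp
    then show ?thesis using from_ones_mono assms(2) by simp
  qed
qed

lemma from_ones_six_times_diff:
  assumes "from_ones j x" "1 \<le> s" "s \<le> 2"
  shows "from_ones (j + 5) (6 * x - real s)"
proof -
  have "from_ones (3 + j + s) (6 * x - real s)"
    using from_ones_diff[OF from_ones_mult[OF from_ones_six assms(1)] from_ones_of_nat] assms(2)
    by simp
  then show ?thesis using from_ones_mono assms(3) by simp
qed

lemma cost_bound_step:
  fixes j c b q n :: nat
  assumes "6 ^ (2 * j) \<le> 6 ^ 4 * q ^ 13" "6 ^ (2 * c) \<le> b ^ 13" "b * q \<le> n"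
  shows "6 ^ (2 * (j + c)) \<le> 6 ^ 4 * n ^ 13"
proof -
  have "(6::nat) ^ (2 * (j + c)) = 6 ^ (2 * j) * 6 ^ (2 * c)" by (simp add: power_add)
  also have "\<dots> \<le> (6 ^ 4 * q ^ 13) * b ^ 13" using assms(1,2) by (intro mult_mono) auto
  also have "\<dots> = 6 ^ 4 * (b * q) ^ 13" by (simp add: power_mult_distrib)
  also have "\<dots> \<le> 6 ^ 4 * n ^ 13" using assms(3) by (intro mult_left_mono power_mono) auto
  finally show ?thesis .
qed

lemma from_ones_cost: "n \<ge> 1 \<Longrightarrow> \<exists>j. from_ones j (real n) \<and> 6 ^ (2 * j) \<le> 6 ^ 4 * n ^ 13"
proof (induction n rule: less_induct)
  case (less n)
  show ?case
  proof (cases "n \<le> 5")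
    case True
    then have "n \<in> {1, 2, 3, 4, 5}" using less.prems by auto
    then have "6 ^ (2 * n) \<le> 6 ^ 4 * n ^ 13" by auto
    then show ?thesis using from_ones_of_nat less.prems by blast
  next
    case False
    define q r where "q = n div 6" and "r = n mod 6"
    have n: "n = 6 * q + r" "r < 6" unfolding q_def r_def by simp_all
    have q: "1 \<le> q" "q < n" "q + 1 < n" using False unfolding q_def by auto
    show ?thesis
    proof (cases "r \<le> 3")
      case True
      obtain j where j: "from_ones j (real q)" "6 ^ (2 * j) \<le> 6 ^ 4 * q ^ 13"
        using less.IH[of q] q by blast
      have "from_ones (j + 6) (real n)"
        using from_ones_six_times_add[OF j(1) True] n by simp
      moreover have "6 ^ (2 * (j + 6)) \<le> 6 ^ 4 * n ^ 13"
        by (rule cost_bound_step[OF j(2), of 6 6]) (use n(1) in simp_all)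
      ultimately show ?thesis by blast
    next
      case False
      obtain j where j: "from_ones j (real (q + 1))" "6 ^ (2 * j) \<le> 6 ^ 4 * (q + 1) ^ 13"
        using less.IH[of "q + 1"] q by auto
      have "from_ones (j + 5) (6 * real (q + 1) - real (6 - r))"
        by (rule from_ones_six_times_diff[OF j(1)]) (use False n(2) in auto)
      moreover have "6 * real (q + 1) - real (6 - r) = real n" using n False by simp
      moreover have "6 ^ (2 * (j + 5)) \<le> 6 ^ 4 * n ^ 13"
        by (rule cost_bound_step[OF j(2), of 5 5]) (use n(1) q(1) False in simp_all)
      ultimately show ?thesis by metis
    qed
  qed
qed

lemma exponent_le_log:
  fixes j n :: nat
  assumes "n \<ge> 1" "6 ^ (2 * j) \<le> 6 ^ 4 * n ^ 13"
  shows "real (2 * j) \<le> 13 * log 6 (real n) + 4"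
proof -
  have "real (6 ^ (2 * j)) \<le> real (6 ^ 4 * n ^ 13)" using assms(2) by (simp only: of_nat_le_iff)
  then have "(6::real) ^ (2 * j) \<le> 6 ^ 4 * real n ^ 13" by simp
  then have "log 6 ((6::real) ^ (2 * j)) \<le> log 6 (6 ^ 4 * real n ^ 13)"
    using assms(1) by (subst log_le_cancel_iff) auto
  also have "\<dots> = log 6 (6 ^ 4) + log 6 (real n ^ 13)"
    using assms(1) by (intro log_mult_pos) auto
  also have "\<dots> = 4 + 13 * log 6 (real n)"
    using assms(1) by (simp only: log_pow_cancel log_nat_power)
  finally show ?thesis by simp
qed

theorem theorem6p2:
  fixes n k :: nat
  assumes "n \<ge> 1"
    and "real k \<ge> 13 * log 6 (real n) + 7"
  shows "real n \<in> E k"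
proof -
  obtain j where j: "from_ones j (real n)" "6 ^ (2 * j) \<le> 6 ^ 4 * n ^ 13"
    using from_ones_cost assms(1) by blast
  have "2 * j + 3 \<le> k" using exponent_le_log[OF assms(1) j(2)] assms(2) by linarith
  show ?thesis unfolding E_def
  proof (intro CollectI allI impI)
    fix S assume "size S = k \<and> set_mset S \<subseteq> real ` {0..9}"
    then have "unit_blocks j S"
      using digits_unit_blocks[OF from_ones_pos[OF j(1)]] \<open>2 * j + 3 \<le> k\<close> by auto
    then show "V S (real n)" using from_ones_imp_V j(1) by blast
  qed
qed

end
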